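(* Let $r>1$, let $V:\mathbb{R}\to\mathbb{R}$ be convex and $L$-Lipschitz with $V'$ also $L$-Lipschitz, such that $m:=e^{-V}$ is a probability density, and let $\rho=e^{-(r+1)V}$. Let $0<c<C$ and $f\in\mathcal{P}_{c,C}$. Then there exists $\lambda\ge0$ depending only on $c$, $C$ and $V$ such that the $W_2$-Hessian of $\mathcal{F}_\rho[g]=\int\rho\, g^{-r}\,dx$ at $f$ is bounded below by $-\lambda$, i.e. for every smooth compactly supported test function $\phi$, $$2(r+1)\int\frac{\rho'}{f^r}\phi'\phi''\,dx+r(r+1)\int\frac{\rho}{f^r}(\phi'')^2\,dx+\int\frac{\rho''}{f^r}(\phi')^2\,dx\ \ge\ -\lambda\int(\phi')^2 f\,dx.$$
   Context: $\mathcal{P}_{c,C}:=\{g\in\mathcal{P}(\mathbb{R}):\ c\,m\le g\le C\,m\}$. *)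

theory Defs
  imports "HOL-Analysis.Analysis"
begin

definition test_fun :: "(real \<Rightarrow> real) \<Rightarrow> bool" where
  "test_fun \<phi> \<longleftrightarrow> (\<forall>n. \<forall>x. ((deriv ^^ n) \<phi>) differentiable (at x))
      \<and> (\<exists>R. \<forall>x. \<bar>x\<bar> > R \<longrightarrow> \<phi> x = 0)"

definition P_cC :: "real \<Rightarrow> real \<Rightarrow> (real \<Rightarrow> real) \<Rightarrow> (real \<Rightarrow> real) set" where
  "P_cC c C m = {g. g \<in> borel_measurable lebesgue
      \<and> (\<integral>\<^sup>+x. ennreal (g x) \<partial>lebesgue) = 1
      \<and> (AE x in lebesgue. c * m x \<le> g x \<and> g x \<le> C * m x)}"

end

theory Submission
  imports Defs
begin

text \<open>
  Write w = exp (-(r+1) V) = m^(r+1). Because V and V' are L-Lipschitz, the derivatives of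
  the weight are controlled by the weight itself: |rho'| <= S w with S = (r+1) L and, wherever
  rho'' exists, |rho''| <= K w with K = (r+1) (L + (r+1) L^2). With a = w / f^r the integrand
  is a quadratic form in (phi', phi'') whose coefficients are bounded by multiples of a;
  completing the square in phi'' bounds it below by -((r+1) S^2 / r + K) a phi'^2. Finally
  f >= c m gives a <= f / c^(r+1), so the integrand is at least -lambda phi'^2 f. Every
  integrand is dominated by a multiple of the integrable f, so the bound integrates.
\<close>

lemma lipschitz_on_DERIV_abs_le:
  fixes g :: "real \<Rightarrow> real"
  assumes "L-lipschitz_on UNIV g" and "(g has_real_derivative D) (at x)"
  shows "\<bar>D\<bar> \<le> L"
proof -
  have "((\<lambda>h. (g (x + h) - g x) / h) \<longlongrightarrow> D) (at 0)"
    using assms(2) by (simp add: DERIV_def)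
  moreover have "\<forall>\<^sub>F h in at 0. norm ((g (x + h) - g x) / h) \<le> L"
  proof (rule always_eventually, rule allI)
    fix h :: real
    have "\<bar>g (x + h) - g x\<bar> \<le> L * \<bar>h\<bar>"
      using lipschitz_onD[OF assms(1), of "x + h" x] by (simp add: dist_real_def)
    then show "norm ((g (x + h) - g x) / h) \<le> L"
      using lipschitz_on_nonneg[OF assms(1)] by (cases "h = 0") (auto simp: norm_divide divide_le_eq)
  qed
  ultimately show ?thesis
    using Lim_norm_ubound[of "at (0::real)"] by fastforce
qed

lemma DERIV_exp_scaled_unique:
  fixes V :: "real \<Rightarrow> real"
  assumes "(V has_real_derivative v) (at x)"
    and "((\<lambda>y. exp (- k * V y)) has_real_derivative w1) (at x)"
  shows "w1 = - k * v * exp (- k * V x)"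
proof -
  have "((\<lambda>y. exp (- k * V y)) has_real_derivative - k * v * exp (- k * V x)) (at x)"
    by (rule derivative_eq_intros assms(1) refl | simp)+
  with assms(2) show ?thesis
    by (rule DERIV_unique)
qed

lemma DERIV_exp_scaled_abs_le:
  fixes V :: "real \<Rightarrow> real"
  assumes "L-lipschitz_on UNIV V" and "(V has_real_derivative v) (at x)"
    and "((\<lambda>y. exp (- k * V y)) has_real_derivative w1) (at x)"
  shows "\<bar>w1\<bar> \<le> \<bar>k\<bar> * L * exp (- k * V x)"
proof -
  have "\<bar>v\<bar> \<le> L"
    using assms(1,2) by (rule lipschitz_on_DERIV_abs_le)
  then show ?thesis
    unfolding DERIV_exp_scaled_unique[OF assms(2,3)]
    by (simp add: abs_mult mult_left_mono mult_right_mono)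
qed

lemma DERIV2_exp_scaled:
  fixes V V' w1 :: "real \<Rightarrow> real"
  assumes k: "k \<noteq> 0"
    and dV: "\<And>x. (V has_real_derivative V' x) (at x)"
    and dw: "\<And>x. ((\<lambda>y. exp (- k * V y)) has_real_derivative w1 x) (at x)"
    and d: "(w1 has_real_derivative d) (at x)"
  obtains W where "(V' has_real_derivative W) (at x)"
    and "d = - k * W * exp (- k * V x) + k\<^sup>2 * (V' x)\<^sup>2 * exp (- k * V x)"
proof -
  define w where "w y = exp (- k * V y)" for y
  have w1: "w1 = (\<lambda>y. - k * V' y * w y)"
    using DERIV_exp_scaled_unique[OF dV dw] unfolding w_def by blast
  have dw': "(w has_real_derivative - k * V' y * w y) (at y)" for y
    using dw[of y] unfolding w1 w_def .
  \<comment> \<open>\<open>V'\<close> is only Lipschitz, but \<open>V' = w1 / (-k w)\<close> is differentiable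
    wherever \<open>w1\<close> is.\<close>
  have "((\<lambda>y. w1 y / (- k * w y)) has_real_derivative
      (d * (- k * w x) - w1 x * (- k * (- k * V' x * w x))) / ((- k * w x) * (- k * w x))) (at x)"
    using k by (intro DERIV_divide d DERIV_cmult dw') (simp add: w_def)
  moreover have "(\<lambda>y. w1 y / (- k * w y)) = V'"
    using k by (simp add: w1 w_def fun_eq_iff)
  ultimately obtain W where dV': "(V' has_real_derivative W) (at x)"
    by auto
  have "(w1 has_real_derivative - k * W * w x + k\<^sup>2 * (V' x)\<^sup>2 * w x) (at x)"
    unfolding w1 by (rule derivative_eq_intros dV' dw' refl | simp add: power2_eq_square)+
  with d have "d = - k * W * w x + k\<^sup>2 * (V' x)\<^sup>2 * w x"
    by (rule DERIV_unique)
  with dV' show ?thesis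
    unfolding w_def by (rule that)
qed

lemma DERIV2_exp_scaled_abs_le:
  fixes V V' w1 :: "real \<Rightarrow> real"
  assumes "k \<noteq> 0" and "L-lipschitz_on UNIV V" and "L-lipschitz_on UNIV V'"
    and dV: "\<And>x. (V has_real_derivative V' x) (at x)"
    and dw: "\<And>x. ((\<lambda>y. exp (- k * V y)) has_real_derivative w1 x) (at x)"
    and d: "(w1 has_real_derivative d) (at x)"
  shows "\<bar>d\<bar> \<le> \<bar>k\<bar> * (L + \<bar>k\<bar> * L\<^sup>2) * exp (- k * V x)"
proof -
  define w where "w = exp (- k * V x)"
  obtain W where dV': "(V' has_real_derivative W) (at x)"
    and d_eq: "d = - k * W * w + k\<^sup>2 * (V' x)\<^sup>2 * w"
    using DERIV2_exp_scaled[OF assms(1) dV dw d] unfolding w_def .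
  have "\<bar>W\<bar> \<le> L" "\<bar>V' x\<bar> \<le> L"
    using lipschitz_on_DERIV_abs_le assms(2,3) dV' dV by blast+
  then have bounds: "\<bar>W\<bar> * w \<le> L * w" "(V' x)\<^sup>2 * w \<le> L\<^sup>2 * w"
    by (auto simp: w_def intro!: mult_right_mono) (metis abs_ge_zero power2_abs power_mono)
  have "\<bar>d\<bar> \<le> \<bar>- k * W * w\<bar> + \<bar>k\<^sup>2 * (V' x)\<^sup>2 * w\<bar>"
    unfolding d_eq by (rule abs_triangle_ineq)
  also have "\<dots> = \<bar>k\<bar> * (\<bar>W\<bar> * w) + k\<^sup>2 * ((V' x)\<^sup>2 * w)"
    by (simp add: w_def abs_mult)
  also have "\<dots> \<le> \<bar>k\<bar> * (L * w) + k\<^sup>2 * (L\<^sup>2 * w)"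
    using bounds by (intro add_mono mult_left_mono) auto
  also have "\<dots> = \<bar>k\<bar> * (L + \<bar>k\<bar> * L\<^sup>2) * w"
    by (simp add: algebra_simps power2_eq_square)
  finally show ?thesis
    unfolding w_def .
qed

lemma borel_measurable_lebesgue_AE_DERIV:
  fixes f f' :: "real \<Rightarrow> real"
  assumes [measurable]: "f \<in> borel_measurable borel"
    and "AE x in lebesgue. (f has_real_derivative f' x) (at x)"
  shows "f' \<in> borel_measurable lebesgue"
proof -
  define D where "D i x = (f (x + inverse (Suc i)) - f x) / inverse (Suc i)" for i x
  have "D i \<in> borel_measurable borel" for i
    unfolding D_def by measurable
  then have "(\<lambda>x. lim (\<lambda>i. D i x)) \<in> borel_measurable borel"
    by (rule borel_measurable_lim_metric)
  then have lim_meas: "(\<lambda>x. lim (\<lambda>i. D i x)) \<in> borel_measurable lebesgue"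
    by (simp add: measurable_completion)
  have h: "filterlim (\<lambda>i. inverse (real (Suc i))) (at 0) sequentially"
    unfolding filterlim_at by (intro conjI LIMSEQ_inverse_real_of_nat) auto
  have "AE x in lebesgue. lim (\<lambda>i. D i x) = f' x"
    using assms(2)
  proof eventually_elim
    case (elim x)
    then have "((\<lambda>h. (f (x + h) - f x) / h) \<longlongrightarrow> f' x) (at 0)"
      by (simp add: DERIV_def)
    from filterlim_compose[OF this h] show ?case
      unfolding D_def by (simp add: o_def limI)
  qed
  with lim_meas show ?thesis
    by (rule borel_measurable_AE)
qed

lemma exp_scaled_derivatives:
  fixes V V' w1 w2 :: "real \<Rightarrow> real"
  assumes k: "k \<noteq> 0" and lipV: "L-lipschitz_on UNIV V" and lipV': "L-lipschitz_on UNIV V'"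
    and dV: "\<And>x. (V has_real_derivative V' x) (at x)"
    and dw: "\<And>x. ((\<lambda>y. exp (- k * V y)) has_real_derivative w1 x) (at x)"
    and dw1: "AE x in lebesgue. (w1 has_real_derivative w2 x) (at x)"
  shows "\<bar>w1 x\<bar> \<le> \<bar>k\<bar> * L * exp (- k * V x)"
    and "AE x in lebesgue. \<bar>w2 x\<bar> \<le> \<bar>k\<bar> * (L + \<bar>k\<bar> * L\<^sup>2) * exp (- k * V x)"
    and "w1 \<in> borel_measurable lebesgue" and "w2 \<in> borel_measurable lebesgue"
proof -
  show "\<bar>w1 x\<bar> \<le> \<bar>k\<bar> * L * exp (- k * V x)"
    using lipV dV dw by (rule DERIV_exp_scaled_abs_le)
  show "AE x in lebesgue. \<bar>w2 x\<bar> \<le> \<bar>k\<bar> * (L + \<bar>k\<bar> * L\<^sup>2) * exp (- k * V x)"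
    using dw1 by eventually_elim (rule DERIV2_exp_scaled_abs_le[OF k lipV lipV' dV dw])
  have "continuous_on UNIV V" "continuous_on UNIV V'"
    using dV lipV' DERIV_isCont lipschitz_on_continuous_on by (blast intro: continuous_at_imp_continuous_on)+
  moreover have "w1 = (\<lambda>x. - k * V' x * exp (- k * V x))"
    using DERIV_exp_scaled_unique[OF dV dw] by (simp add: fun_eq_iff)
  ultimately have "w1 \<in> borel_measurable borel"
    by (auto intro!: borel_measurable_continuous_onI continuous_intros)
  then show "w1 \<in> borel_measurable lebesgue" "w2 \<in> borel_measurable lebesgue"
    using borel_measurable_lebesgue_AE_DERIV[OF _ dw1] by (auto simp: measurable_completion)
qed

lemma test_fun_continuous: "test_fun \<phi> \<Longrightarrow> continuous_on UNIV \<phi>"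
  unfolding test_fun_def
  by (metis funpow_0 differentiable_imp_continuous_within continuous_at_imp_continuous_on)

lemma test_fun_borel_measurable: "test_fun \<phi> \<Longrightarrow> \<phi> \<in> borel_measurable lebesgue"
  by (simp add: test_fun_continuous borel_measurable_continuous_onI measurable_completion)

lemma test_fun_deriv:
  assumes "test_fun \<phi>"
  shows "test_fun (deriv \<phi>)"
proof -
  obtain R where R: "\<And>x. \<bar>x\<bar> > R \<Longrightarrow> \<phi> x = 0"
    using assms unfolding test_fun_def by auto
  have "deriv \<phi> x = 0" if "\<bar>x\<bar> > R" for x
  proof -
    have "open {y::real. R < \<bar>y\<bar>}"
      by (intro open_Collect_less continuous_intros)
    then have "\<forall>\<^sub>F y in nhds x. R < \<bar>y\<bar>"
      using that eventually_nhds_in_open by fastforce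
    then have "\<forall>\<^sub>F y in nhds x. \<phi> y = 0"
      by (rule eventually_mono) (rule R)
    then have "deriv \<phi> x = deriv (\<lambda>_. 0) x"
      by (rule deriv_cong_ev) simp
    then show ?thesis
      by simp
  qed
  moreover have "(deriv ^^ n) (deriv \<phi>) differentiable (at x)" for n x
  proof -
    have "(deriv ^^ Suc n) \<phi> differentiable (at x)"
      using assms unfolding test_fun_def by blast
    then show ?thesis
      by (simp only: funpow_Suc_right o_apply)
  qed
  ultimately show ?thesis
    unfolding test_fun_def by blast
qed

lemma test_fun_bounded:
  assumes "test_fun \<phi>"
  obtains B where "\<And>x. \<bar>\<phi> x\<bar> \<le> B"
proof -
  obtain R where R: "\<And>x. \<bar>x\<bar> > R \<Longrightarrow> \<phi> x = 0"
    using assms unfolding test_fun_def by auto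
  have "\<phi> x \<in> insert 0 (\<phi> ` cball 0 R)" for x
    using R[of x] by (cases "R < \<bar>x\<bar>") (auto simp: dist_real_def)
  moreover have "compact (\<phi> ` cball 0 R)"
    by (rule compact_continuous_image[OF continuous_on_subset[OF test_fun_continuous[OF assms]]]) auto
  ultimately have "bounded (range \<phi>)"
    by (metis bounded_insert bounded_subset compact_imp_bounded image_subsetI)
  then show ?thesis
    using that by (auto simp: bounded_real)
qed

lemma P_cC_integrable:
  assumes "g \<in> P_cC c C m" and "0 \<le> c" and "\<And>x. 0 \<le> m x"
  shows "integrable lebesgue g"
proof -
  have "AE x in lebesgue. 0 \<le> g x"
    using assms unfolding P_cC_def by (auto elim!: eventually_mono intro: order_trans[rotated])
  with assms(1) show ?thesis
    unfolding P_cC_def by (intro integrableI_nonneg) auto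
qed

lemma powr_scaled_exp_le:
  fixes a c v y :: real
  assumes "0 < c" and "c * exp (- v) \<le> y" and "0 \<le> a"
  shows "c powr a * exp (- a * v) \<le> y powr a"
proof -
  have "c powr a * exp (- a * v) = (c * exp (- v)) powr a"
    using assms(1) by (simp add: powr_mult exp_powr_real mult.commute)
  also have "\<dots> \<le> y powr a"
    using assms by (intro powr_mono2) auto
  finally show ?thesis .
qed

lemma P_cC_exp_scaled_le:
  assumes "f \<in> P_cC c C (\<lambda>x. exp (- V x))" and "0 < c" and "0 \<le> a"
  shows "AE x in lebesgue. 0 < f x \<and> c powr a * exp (- a * V x) \<le> f x powr a"
proof -
  have "AE x in lebesgue. c * exp (- V x) \<le> f x"
    using assms(1) unfolding P_cC_def by auto
  then show ?thesis
  proof eventually_elim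
    case (elim x)
    have "0 < c * exp (- V x)"
      using assms(2) by simp
    with elim show ?case
      using powr_scaled_exp_le[OF assms(2) elim assms(3)] by simp
  qed
qed

lemma quadratic_form_lower_bound:
  fixes r a b e p q S K :: real
  assumes r: "0 < r" and a: "0 \<le> a" and b: "\<bar>b\<bar> \<le> S * a" and e: "\<bar>e\<bar> \<le> K * a"
  shows "2 * (r + 1) * b * p * q + r * (r + 1) * a * q\<^sup>2 + e * p\<^sup>2
    \<ge> - ((r + 1) * S\<^sup>2 / r + K) * a * p\<^sup>2"
proof (cases "a = 0")
  case True
  then show ?thesis
    using b e by simp
next
  case False
  with a have a_pos: "0 < a"
    by simp
  define s where "s = b / a"
  have b_eq: "b = s * a" and s: "\<bar>s\<bar> \<le> S"
    using a_pos b by (auto simp: s_def abs_div divide_le_eq)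
  have "s\<^sup>2 \<le> S\<^sup>2"
    using s by (metis abs_ge_zero power2_abs power_mono)
  then have "(r + 1) * s\<^sup>2 / r * a * p\<^sup>2 \<le> (r + 1) * S\<^sup>2 / r * a * p\<^sup>2"
    using r a by (intro mult_right_mono divide_right_mono mult_left_mono) auto
  moreover have "- K * a * p\<^sup>2 \<le> e * p\<^sup>2"
    using e by (intro mult_right_mono) auto
  moreover have "0 \<le> r * (r + 1) * a * (q + s * p / r)\<^sup>2"
    using r a by simp
  moreover have "r * (r + 1) * a * (q + s * p / r)\<^sup>2
      = 2 * (r + 1) * b * p * q + r * (r + 1) * a * q\<^sup>2 + (r + 1) * s\<^sup>2 / r * a * p\<^sup>2"
    using r by (simp add: b_eq power2_eq_square field_simps)
  moreover have "- ((r + 1) * S\<^sup>2 / r + K) * a * p\<^sup>2 = - ((r + 1) * S\<^sup>2 / r * a * p\<^sup>2) + - K * a * p\<^sup>2"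
    by (simp add: algebra_simps)
  ultimately show ?thesis
    by linarith
qed

lemma abs_div_powr_le_of_weight:
  fixes r \<kappa> y w u A :: real
  assumes "0 < \<kappa>" and "0 < y" and "0 < w" and "\<kappa> * w \<le> y powr (r + 1)" and "\<bar>u\<bar> \<le> A * w"
  shows "\<bar>u / y powr r\<bar> \<le> A / \<kappa> * y"
proof -
  have "0 \<le> A"
    using assms(3,5) by (smt (verit) mult_neg_pos)
  have "w / y powr r \<le> y / \<kappa>"
    using assms(1-4) by (simp add: powr_add field_simps)
  then have "A * (w / y powr r) \<le> A * (y / \<kappa>)"
    using \<open>0 \<le> A\<close> by (rule mult_left_mono)
  moreover have "\<bar>u / y powr r\<bar> \<le> A * (w / y powr r)"
    using assms(2,5) by (simp add: abs_div divide_right_mono)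
  ultimately show ?thesis
    by simp
qed

lemma weighted_quadratic_form_pointwise_lower_bound:
  fixes r \<kappa> y w w1 w2 p q S K :: real
  assumes r: "0 < r" and \<kappa>: "0 < \<kappa>" and y: "0 < y" and w: "0 < w"
    and "\<kappa> * w \<le> y powr (r + 1)" and w1: "\<bar>w1\<bar> \<le> S * w" and w2: "\<bar>w2\<bar> \<le> K * w"
  shows "2 * (r + 1) * (w1 / y powr r * p * q) + r * (r + 1) * (w / y powr r * q\<^sup>2) + w2 / y powr r * p\<^sup>2
    \<ge> - (((r + 1) * S\<^sup>2 / r + K) / \<kappa>) * (p\<^sup>2 * y)"
proof -
  define N where "N = (r + 1) * S\<^sup>2 / r + K"
  have "0 \<le> K"
    using w w2 by (smt (verit) mult_neg_pos)
  then have "0 \<le> N"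
    using r by (simp add: N_def)
  have "w / y powr r \<le> y / \<kappa>"
    using abs_div_powr_le_of_weight[OF \<kappa> y w assms(5), of w 1] w by simp
  then have "N * (w / y powr r) * p\<^sup>2 \<le> N * (y / \<kappa>) * p\<^sup>2"
    using \<open>0 \<le> N\<close> by (intro mult_right_mono mult_left_mono) auto
  then have "- (N / \<kappa>) * (p\<^sup>2 * y) \<le> - N * (w / y powr r) * p\<^sup>2"
    by (simp add: mult_ac)
  also have "\<dots> \<le> 2 * (r + 1) * (w1 / y powr r) * p * q + r * (r + 1) * (w / y powr r) * q\<^sup>2
      + w2 / y powr r * p\<^sup>2"
    unfolding N_def using r y w w1 w2
    by (intro quadratic_form_lower_bound) (auto simp: abs_div divide_right_mono)
  finally show ?thesis
    unfolding N_def by (simp add: mult_ac)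
qed

lemma integrable_mult_bounded_dominated:
  fixes c g f :: "'a \<Rightarrow> real"
  assumes c: "AE x in M. \<bar>c x\<bar> \<le> A * f x" and f: "integrable M f" and g: "\<And>x. \<bar>g x\<bar> \<le> G"
    and "c \<in> borel_measurable M" and "g \<in> borel_measurable M"
  shows "integrable M (\<lambda>x. c x * g x)"
proof (rule Bochner_Integration.integrable_bound[OF integrable_mult_right[OF f, of "A * G"]])
  show "(\<lambda>x. c x * g x) \<in> borel_measurable M"
    using assms(4,5) by measurable
  show "AE x in M. norm (c x * g x) \<le> norm (A * G * f x)"
    using c
  proof eventually_elim
    case (elim x)
    then have "\<bar>c x\<bar> * \<bar>g x\<bar> \<le> A * f x * G"
      using g by (intro mult_mono) (auto intro: order_trans[OF abs_ge_zero])
    then have "\<bar>c x * g x\<bar> \<le> A * G * f x"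
      by (simp add: abs_mult mult_ac)
    then show ?case
      using abs_ge_self[of "A * G * f x"] by simp
  qed
qed

lemma weighted_quadratic_form_integral_lower_bound:
  fixes M :: "'a measure" and w w1 w2 f p q :: "'a \<Rightarrow> real"
  assumes r: "0 < r" and \<kappa>: "0 < \<kappa>"
    and [measurable]: "w \<in> borel_measurable M" "w1 \<in> borel_measurable M" "w2 \<in> borel_measurable M"
      "f \<in> borel_measurable M" "p \<in> borel_measurable M" "q \<in> borel_measurable M"
    and f: "integrable M f" and p: "\<And>x. \<bar>p x\<bar> \<le> P" and q: "\<And>x. \<bar>q x\<bar> \<le> Q"
    and weights: "AE x in M. 0 < f x \<and> 0 < w x \<and> \<kappa> * w x \<le> f x powr (r + 1)
      \<and> \<bar>w1 x\<bar> \<le> S * w x \<and> \<bar>w2 x\<bar> \<le> K * w x"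
  shows "2 * (r + 1) * (\<integral>x. w1 x / f x powr r * p x * q x \<partial>M)
      + r * (r + 1) * (\<integral>x. w x / f x powr r * (q x)\<^sup>2 \<partial>M)
      + (\<integral>x. w2 x / f x powr r * (p x)\<^sup>2 \<partial>M)
    \<ge> - (((r + 1) * S\<^sup>2 / r + K) / \<kappa>) * (\<integral>x. (p x)\<^sup>2 * f x \<partial>M)"
proof -
  have pq: "\<bar>p x * q x\<bar> \<le> P * Q" "\<bar>(p x)\<^sup>2\<bar> \<le> P\<^sup>2" "\<bar>(q x)\<^sup>2\<bar> \<le> Q\<^sup>2" for x
    using mult_mono'[OF p[of x] q[of x] abs_ge_zero abs_ge_zero]
      power_mono[OF p[of x] abs_ge_zero, where n = 2] power_mono[OF q[of x] abs_ge_zero, where n = 2]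
    by (simp_all add: abs_mult)
  have "AE x in M. \<bar>w1 x / f x powr r\<bar> \<le> S / \<kappa> * f x"
    using weights by eventually_elim (rule abs_div_powr_le_of_weight[OF \<kappa>]; auto)
  then have "integrable M (\<lambda>x. w1 x / f x powr r * (p x * q x))"
    by (rule integrable_mult_bounded_dominated[OF _ f pq(1)]; measurable)
  then have int1: "integrable M (\<lambda>x. w1 x / f x powr r * p x * q x)"
    by (simp only: mult.assoc)
  have "AE x in M. \<bar>w x / f x powr r\<bar> \<le> 1 / \<kappa> * f x"
    using weights by eventually_elim (rule abs_div_powr_le_of_weight[OF \<kappa>]; auto)
  then have int2: "integrable M (\<lambda>x. w x / f x powr r * (q x)\<^sup>2)"
    by (rule integrable_mult_bounded_dominated[OF _ f pq(3)]; measurable)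
  have "AE x in M. \<bar>w2 x / f x powr r\<bar> \<le> K / \<kappa> * f x"
    using weights by eventually_elim (rule abs_div_powr_le_of_weight[OF \<kappa>]; auto)
  then have int3: "integrable M (\<lambda>x. w2 x / f x powr r * (p x)\<^sup>2)"
    by (rule integrable_mult_bounded_dominated[OF _ f pq(2)]; measurable)
  have "AE x in M. \<bar>f x\<bar> \<le> 1 * f x"
    using weights by eventually_elim simp
  then have "integrable M (\<lambda>x. f x * (p x)\<^sup>2)"
    by (rule integrable_mult_bounded_dominated[OF _ f pq(2)]; measurable)
  then have int4: "integrable M (\<lambda>x. (p x)\<^sup>2 * f x)"
    by (simp only: mult.commute)
  have pointwise: "AE x in M. - (((r + 1) * S\<^sup>2 / r + K) / \<kappa>) * ((p x)\<^sup>2 * f x)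
      \<le> 2 * (r + 1) * (w1 x / f x powr r * p x * q x) + r * (r + 1) * (w x / f x powr r * (q x)\<^sup>2)
        + w2 x / f x powr r * (p x)\<^sup>2"
    using weights by eventually_elim (rule weighted_quadratic_form_pointwise_lower_bound[OF r \<kappa>]; auto)
  have integral_lin: "(\<integral>x. a * g1 x + b * g2 x + g3 x \<partial>M)
      = a * integral\<^sup>L M g1 + b * integral\<^sup>L M g2 + integral\<^sup>L M g3"
    if "integrable M g1" "integrable M g2" "integrable M g3" for a b :: real and g1 g2 g3
    using that by simp
  have "- (((r + 1) * S\<^sup>2 / r + K) / \<kappa>) * (\<integral>x. (p x)\<^sup>2 * f x \<partial>M)
      = (\<integral>x. - (((r + 1) * S\<^sup>2 / r + K) / \<kappa>) * ((p x)\<^sup>2 * f x) \<partial>M)"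
    by (rule integral_mult_right_zero[symmetric])
  also have "\<dots> \<le> (\<integral>x. 2 * (r + 1) * (w1 x / f x powr r * p x * q x)
      + r * (r + 1) * (w x / f x powr r * (q x)\<^sup>2) + w2 x / f x powr r * (p x)\<^sup>2 \<partial>M)"
    using int1 int2 int3 int4
    by (intro integral_mono_AE[OF _ _ pointwise] Bochner_Integration.integrable_add
        Bochner_Integration.integrable_mult_right)
  also have "\<dots> = 2 * (r + 1) * (\<integral>x. w1 x / f x powr r * p x * q x \<partial>M)
      + r * (r + 1) * (\<integral>x. w x / f x powr r * (q x)\<^sup>2 \<partial>M)
      + (\<integral>x. w2 x / f x powr r * (p x)\<^sup>2 \<partial>M)"
    by (rule integral_lin[OF int1 int2 int3])
  finally show ?thesis .
qed

lemma P_cC_hessian_lower_bound: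
  fixes V rho1 rho2 f \<phi> :: "real \<Rightarrow> real"
  assumes r: "0 < r" and c: "0 < c"
    and f: "f \<in> P_cC c C (\<lambda>x. exp (- V x))" and \<phi>: "test_fun \<phi>"
    and [measurable]: "V \<in> borel_measurable lebesgue" "rho1 \<in> borel_measurable lebesgue"
      "rho2 \<in> borel_measurable lebesgue"
    and rho1: "\<And>x. \<bar>rho1 x\<bar> \<le> S * exp (- (r + 1) * V x)"
    and rho2: "AE x in lebesgue. \<bar>rho2 x\<bar> \<le> K * exp (- (r + 1) * V x)"
  shows "2 * (r + 1) * (\<integral>x. rho1 x / f x powr r * deriv \<phi> x * deriv (deriv \<phi>) x \<partial>lebesgue)
      + r * (r + 1) * (\<integral>x. exp (- (r + 1) * V x) / f x powr r * (deriv (deriv \<phi>) x)\<^sup>2 \<partial>lebesgue)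
      + (\<integral>x. rho2 x / f x powr r * (deriv \<phi> x)\<^sup>2 \<partial>lebesgue)
    \<ge> - (((r + 1) * S\<^sup>2 / r + K) / c powr (r + 1)) * (\<integral>x. (deriv \<phi> x)\<^sup>2 * f x \<partial>lebesgue)"
proof -
  have derivs: "test_fun (deriv \<phi>)" "test_fun (deriv (deriv \<phi>))"
    using \<phi> by (simp_all add: test_fun_deriv)
  have "0 \<le> r + 1"
    using r by simp
  from P_cC_exp_scaled_le[OF f c this] rho2
  have "AE x in lebesgue. 0 < f x \<and> 0 < exp (- (r + 1) * V x)
      \<and> c powr (r + 1) * exp (- (r + 1) * V x) \<le> f x powr (r + 1)
      \<and> \<bar>rho1 x\<bar> \<le> S * exp (- (r + 1) * V x) \<and> \<bar>rho2 x\<bar> \<le> K * exp (- (r + 1) * V x)"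
    by eventually_elim (blast intro: rho1 exp_gt_zero)
  moreover obtain P Q where "\<And>x. \<bar>deriv \<phi> x\<bar> \<le> P" "\<And>x. \<bar>deriv (deriv \<phi>) x\<bar> \<le> Q"
    using derivs test_fun_bounded by metis
  moreover have "integrable lebesgue f"
    using f by (rule P_cC_integrable) (use c in auto)
  moreover have "f \<in> borel_measurable lebesgue"
    using f by (simp add: P_cC_def)
  ultimately show ?thesis
    using r c derivs
    by (intro weighted_quadratic_form_integral_lower_bound) (auto simp: test_fun_borel_measurable)
qed

theorem proposition2p4:
  fixes r L c C :: real and V V' rho1 rho2 :: "real \<Rightarrow> real"
  assumes "r > 1"
    and "convex_on UNIV V"
    and "L-lipschitz_on UNIV V"
    and "\<And>x. (V has_real_derivative V' x) (at x)"
    and "L-lipschitz_on UNIV V'"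
    and "(\<integral>\<^sup>+x. ennreal (exp (- V x)) \<partial>lebesgue) = 1"
    and "\<And>x. ((\<lambda>y. exp (- (r + 1) * V y)) has_real_derivative rho1 x) (at x)"
    and "AE x in lebesgue. (rho1 has_real_derivative rho2 x) (at x)"
    and "0 < c" and "c < C"
  shows "\<exists>lam\<ge>0. \<forall>f \<in> P_cC c C (\<lambda>x. exp (- V x)). \<forall>\<phi>. test_fun \<phi> \<longrightarrow>
     2 * (r + 1) * (\<integral>x. rho1 x / f x powr r * deriv \<phi> x * deriv (deriv \<phi>) x \<partial>lebesgue)
     + r * (r + 1) * (\<integral>x. exp (- (r + 1) * V x) / f x powr r * (deriv (deriv \<phi>) x)\<^sup>2 \<partial>lebesgue)
     + (\<integral>x. rho2 x / f x powr r * (deriv \<phi> x)\<^sup>2 \<partial>lebesgue)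
     \<ge> - lam * (\<integral>x. (deriv \<phi> x)\<^sup>2 * f x \<partial>lebesgue)"
proof -
  have r: "0 < r" and L: "0 \<le> L"
    using assms(1,3) lipschitz_on_nonneg by auto
  have r1: "r + 1 \<noteq> 0" and abs_r1: "\<bar>r + 1\<bar> = r + 1"
    using r by auto
  note weight = exp_scaled_derivatives[OF r1 assms(3,5,4,7,8), unfolded abs_r1]
  have "continuous_on UNIV V"
    using assms(4) DERIV_isCont by (blast intro: continuous_at_imp_continuous_on)
  then have V: "V \<in> borel_measurable lebesgue"
    by (simp add: borel_measurable_continuous_onI measurable_completion)
  show ?thesis
  proof (intro exI[of _ "((r + 1) * ((r + 1) * L)\<^sup>2 / r + (r + 1) * (L + (r + 1) * L\<^sup>2)) / c powr (r + 1)"]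
      conjI ballI allI impI)
    show "0 \<le> ((r + 1) * ((r + 1) * L)\<^sup>2 / r + (r + 1) * (L + (r + 1) * L\<^sup>2)) / c powr (r + 1)"
      using r L by simp
  qed (rule P_cC_hessian_lower_bound[OF r assms(9) _ _ V weight(3,4,1,2)]; assumption)
qed

end
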